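(* Let $m\in\mathbf{N}\cup\{\infty\}$, let $G$ be a group of isometries of the hyperbolic space $\mathbb{H}_m$, and let $f\in G$ be a parabolic isometry, with fixed point $\xi\in\partial\mathbb{H}_m$. Assume: (i) there are constants $C>0$, $C'>0$ and a point $x_0\in\mathbb{H}_m$ such that ${\sf{dist}}(f^n(x_0),x_0)\ge C\log n-C'$ for all sufficiently large $n$; (ii) there is a horoball $B$ centered at $\xi$ such that for every $g\in G$, either $gB=B$ or $gB\cap B=\emptyset$. Then $f$ is at most $n^{2/C}$-distorted in $G$: for every finitely generated subgroup $\Gamma\le G$ containing $f$, $\delta^\Gamma_f(n)\preceq n^{2/C}$. In particular $C\le2$, and if $C=2$ then $f$ is undistorted in $G$.
   Context: Model of $\mathbb{H}_m$: let $\mathcal{H}$ be a real Hilbert space of dimension $m+1$ with a unit vector $\mathbf{e}_0$ and Hilbert basis $(\mathbf{e}_i)_{i\in I}$ of $\mathbf{e}_0^\perp$; set $\langle u|u'\rangle=a_0a'_0-\sum_ia_ia'_i$. $\mathbb{H}_m$ is the sheet of $\{\langle u|u\rangle=1\}$ containing $\mathbf{e}_0$, with $\cosh{\sf{dist}}(u,u')=\langle u|u'\rangle$; boundary points are isotropic rays. Isometries are the elements of ${\sf{O}}(\langle\cdot|\cdot\rangle)$ preserving this sheet; an isometry is parabolic if it fixes no point of $\mathbb{H}_m$ but fixes an isotropic line, and has translation length $\inf_x{\sf{dist}}(x,h(x))=0$. For a boundary point given by an isotropic vector $\xi$ (with $\langle \xi|\mathbf{e}_0\rangle>0$) and $\epsilon>0$,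 the horoball is $H_\xi(\epsilon)=\{v\in\mathbb{H}_m: 0<\langle v|\xi\rangle<\epsilon\}$; a horoball centered at $\xi$ is any such set. Distortion: $f\preceq g$ means $f(x)\le Cg(C'x)+C''$ for constants; $\delta_{c,S}(n)=\sup\{k: c^k\in S^n\}$ for a finite symmetric generating set $S\ni1$ of $\Gamma$, with $\simeq$-class $\delta^\Gamma_c$; $c$ is undistorted in $G$ if $\delta^\Gamma_c(n)\preceq n$ for all finitely generated $\Gamma\le G$ containing $c$. *)

theory Defs
  imports "HOL-Analysis.Analysis"
begin

text \<open>Minkowski model: the Hilbert space of dimension m+1 is realised as
  real \<times> 'a, where 'a is a real Hilbert space (the orthogonal complement of e0,
  of arbitrary, possibly infinite, Hilbert dimension m); e0 = (1,0).\<close>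

definition mink :: "real \<times> ('a::real_inner) \<Rightarrow> real \<times> 'a \<Rightarrow> real" where
  "mink u v = fst u * fst v - inner (snd u) (snd v)"

definition e0 :: "real \<times> ('a::real_inner)" where
  "e0 = (1, 0)"

definition hyp :: "(real \<times> ('a::real_inner)) set" where
  "hyp = {v. mink v v = 1 \<and> mink v e0 > 0}"

definition hdist :: "real \<times> ('a::real_inner) \<Rightarrow> real \<times> 'a \<Rightarrow> real" where
  "hdist u v = arcosh (mink u v)"

definition isometry :: "(real \<times> ('a::real_inner) \<Rightarrow> real \<times> 'a) \<Rightarrow> bool" where
  "isometry h \<longleftrightarrow> bounded_linear h \<and> bij h \<and> (\<forall>u v. mink (h u) (h v) = mink u v)
      \<and> h ` hyp = hyp"

definition isotropic :: "real \<times> ('a::real_inner) \<Rightarrow> bool" where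
  "isotropic \<xi> \<longleftrightarrow> \<xi> \<noteq> 0 \<and> mink \<xi> \<xi> = 0"

definition fixes_line :: "(real \<times> ('a::real_inner) \<Rightarrow> real \<times> 'a) \<Rightarrow> real \<times> 'a \<Rightarrow> bool" where
  "fixes_line h \<xi> \<longleftrightarrow> (\<exists>c. h \<xi> = c *\<^sub>R \<xi>)"

definition translation_length :: "(real \<times> ('a::real_inner) \<Rightarrow> real \<times> 'a) \<Rightarrow> real" where
  "translation_length h = (INF x\<in>hyp. hdist x (h x))"

definition parabolic :: "(real \<times> ('a::real_inner) \<Rightarrow> real \<times> 'a) \<Rightarrow> bool" where
  "parabolic h \<longleftrightarrow> isometry h \<and> (\<forall>x\<in>hyp. h x \<noteq> x)
     \<and> (\<exists>\<xi>. isotropic \<xi> \<and> fixes_line h \<xi>) \<and> translation_length h = 0"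

definition horoball :: "real \<times> ('a::real_inner) \<Rightarrow> real \<Rightarrow> (real \<times> 'a) set" where
  "horoball \<xi> \<epsilon> = {v\<in>hyp. 0 < mink v \<xi> \<and> mink v \<xi> < \<epsilon>}"

definition isometry_group :: "(real \<times> ('a::real_inner) \<Rightarrow> real \<times> 'a) set \<Rightarrow> bool" where
  "isometry_group G \<longleftrightarrow> (\<forall>g\<in>G. isometry g) \<and> id \<in> G
     \<and> (\<forall>g\<in>G. \<forall>h\<in>G. g \<circ> h \<in> G) \<and> (\<forall>g\<in>G. inv g \<in> G)"

fun prods :: "('b \<Rightarrow> 'b) set \<Rightarrow> nat \<Rightarrow> ('b \<Rightarrow> 'b) set" where
  "prods S 0 = {id}"
| "prods S (Suc n) = {s \<circ> g | s g. s \<in> S \<and> g \<in> prods S n}"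

definition fin_sym_gen_set :: "('b \<Rightarrow> 'b) set \<Rightarrow> ('b \<Rightarrow> 'b) set \<Rightarrow> bool" where
  "fin_sym_gen_set S \<Gamma> \<longleftrightarrow> finite S \<and> id \<in> S \<and> (\<forall>s\<in>S. bij s \<and> inv s \<in> S)
     \<and> \<Gamma> = (\<Union>n. prods S n)"

definition delta :: "('b \<Rightarrow> 'b) set \<Rightarrow> ('b \<Rightarrow> 'b) \<Rightarrow> nat \<Rightarrow> nat" where
  "delta S c n = Sup {k. c ^^ k \<in> prods S n}"

definition preceq :: "(nat \<Rightarrow> real) \<Rightarrow> (real \<Rightarrow> real) \<Rightarrow> bool" where
  "preceq f g \<longleftrightarrow> (\<exists>A>0. \<exists>B>0. \<exists>D. \<forall>n. f n \<le> A * g (B * real n) + D)"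

definition undistorted :: "(real \<times> ('a::real_inner) \<Rightarrow> real \<times> 'a) \<Rightarrow> (real \<times> 'a \<Rightarrow> real \<times> 'a) set \<Rightarrow> bool" where
  "undistorted c G \<longleftrightarrow> (\<forall>\<Gamma> S. \<Gamma> \<subseteq> G \<and> c \<in> \<Gamma> \<and> fin_sym_gen_set S \<Gamma>
      \<longrightarrow> preceq (\<lambda>n. real (delta S c n)) (\<lambda>x. x))"

end

theory Submission
  imports Defs
begin

text \<open>Precise invariance of the horoball forces every element of G that fixes the line
  of \<xi> to fix \<xi> itself, and keeps every orbit at height \<open>\<langle>g x|\<xi>\<rangle>\<close> bounded below.
  The hyperboloid projects radially onto the horosphere \<open>\<langle>v|\<xi>\<rangle> = 1\<close>, on which minus
  the Minkowski form is a Euclidean metric. As heights are bounded below, each generator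
  moves the points of an orbit by a bounded amount there, so a word of length n moves x
  by O(n). For an element fixing \<xi> this horospherical displacement d determines the
  hyperbolic one, \<open>cosh dist = 1 + (\<langle>x|\<xi>\<rangle> d)\<^sup>2/2\<close>; hence \<open>f\<^sup>k \<in> S\<^sup>n\<close> implies
  \<open>dist(f\<^sup>k x\<^sub>0, x\<^sub>0) \<le> 2 log n + O(1)\<close>. Against the lower bound \<open>C log k - C'\<close>
  this gives \<open>k = O(n\<^bsup>2/C\<^esup>)\<close>, and the words \<open>f\<^sup>n \<in> {f}\<^sup>n\<close> force \<open>C \<le> 2\<close>.\<close>

section \<open>Minkowski form and the hyperboloid\<close>

lemma mink_add_left: "mink (x + y) z = mink x z + mink y z"
  by (simp add: mink_def inner_add_left algebra_simps)

lemma mink_diff_left: "mink (x - y) z = mink x z - mink y z"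
  by (simp add: mink_def inner_diff_left algebra_simps)

lemma mink_scaleR_left: "mink (a *\<^sub>R x) z = a * mink x z"
  by (simp add: mink_def algebra_simps)

lemma mink_commute: "mink x y = mink y x"
  by (simp add: mink_def inner_commute mult.commute)

lemma mink_add_right: "mink z (x + y) = mink z x + mink z y"
  by (simp add: mink_def inner_add_right algebra_simps)

lemma mink_diff_right: "mink z (x - y) = mink z x - mink z y"
  by (simp add: mink_def inner_diff_right algebra_simps)

lemma mink_scaleR_right: "mink z (a *\<^sub>R x) = a * mink z x"
  by (simp add: mink_def algebra_simps)

lemmas mink_bilinear = mink_add_left mink_diff_left mink_scaleR_left
  mink_add_right mink_diff_right mink_scaleR_right

lemma mink_e0: "mink v e0 = fst v"
  by (simp add: mink_def e0_def)

lemma mink_self: "mink v v = (fst v)\<^sup>2 - (norm (snd v))\<^sup>2"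
  by (simp add: mink_def dot_square_norm power2_eq_square)

lemma hyp_iff: "v \<in> hyp \<longleftrightarrow> (fst v)\<^sup>2 = 1 + (norm (snd v))\<^sup>2 \<and> fst v > 0"
  by (auto simp: hyp_def mink_self mink_e0)

lemma mink_hyp_ge_one:
  assumes "p \<in> hyp" "q \<in> hyp"
  shows "1 \<le> mink p q"
proof -
  define a b where "a = norm (snd p)" and "b = norm (snd q)"
  have p: "fst p = sqrt (1 + a\<^sup>2)" and q: "fst q = sqrt (1 + b\<^sup>2)"
    using assms by (auto simp: hyp_iff a_def b_def intro!: real_sqrt_unique[symmetric])
  have "(1 + a * b)\<^sup>2 \<le> (1 + a\<^sup>2) * (1 + b\<^sup>2)"
    using sum_squares_bound[of a b] by (simp add: power2_eq_square algebra_simps)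
  then have "1 + a * b \<le> fst p * fst q"
    by (simp add: p q real_le_rsqrt flip: real_sqrt_mult)
  moreover have "inner (snd p) (snd q) \<le> a * b"
    using norm_cauchy_schwarz by (simp add: a_def b_def)
  moreover have "0 \<le> a * b" by (simp add: a_def b_def)
  ultimately show ?thesis by (simp add: mink_def)
qed

lemma isotropic_snd_norm:
  assumes "mink \<xi> \<xi> = 0" "0 < mink \<xi> e0"
  shows "norm (snd \<xi>) = fst \<xi>"
proof -
  have "(norm (snd \<xi>))\<^sup>2 = (fst \<xi>)\<^sup>2" using assms(1) by (simp add: mink_self)
  then show ?thesis using assms(2) by (simp add: mink_e0 power2_eq_iff_nonneg)
qed

lemma mink_hyp_isotropic_pos:
  assumes "v \<in> hyp" "mink \<xi> \<xi> = 0" "0 < mink \<xi> e0"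
  shows "0 < mink v \<xi>"
proof -
  have "norm (snd v) < fst v"
    using assms(1) by (auto simp: hyp_iff intro: power2_less_imp_less)
  moreover have "inner (snd v) (snd \<xi>) \<le> norm (snd v) * fst \<xi>"
    using norm_cauchy_schwarz[of "snd v" "snd \<xi>"] isotropic_snd_norm[OF assms(2,3)] by simp
  moreover have "0 < fst \<xi>" using assms(3) by (simp add: mink_e0)
  ultimately have "0 < fst \<xi> * (fst v - norm (snd v)) \<and> fst \<xi> * (fst v - norm (snd v)) \<le> mink v \<xi>"
    by (simp add: mink_def algebra_simps)
  then show ?thesis by linarith
qed

lemma hyp_if_mink_isotropic_pos:
  assumes "mink v v = 1" "0 < mink v \<xi>" "mink \<xi> \<xi> = 0" "0 < mink \<xi> e0"
  shows "v \<in> hyp"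
proof -
  have lt: "norm (snd v) < \<bar>fst v\<bar>"
    using assms(1) by (auto simp: mink_self intro: power2_less_imp_less)
  have cs: "- inner (snd v) (snd \<xi>) \<le> norm (snd v) * fst \<xi>"
    using norm_cauchy_schwarz[of "- snd v" "snd \<xi>"] isotropic_snd_norm[OF assms(3,4)] by simp
  have xi: "0 < fst \<xi>" using assms(4) by (simp add: mink_e0)
  have "0 < fst v"
  proof (rule ccontr)
    assume "\<not> 0 < fst v"
    then have "fst \<xi> * (fst v + norm (snd v)) < 0"
      using lt xi by (simp add: mult_pos_neg)
    moreover have "mink v \<xi> \<le> fst \<xi> * (fst v + norm (snd v))"
      using cs by (simp add: mink_def algebra_simps)
    ultimately show False using assms(2) by linarith
  qed
  then show ?thesis using assms(1) by (simp add: hyp_def mink_e0)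
qed

section \<open>Horospherical coordinates\<close>

text \<open>Coordinates on the Minkowski-orthogonal complement of \<xi> in which minus the Minkowski
  form becomes the inner product of the Hilbert space; horo_proj composes them with the radial
  projection onto the horosphere \<open>\<langle>v|\<xi>\<rangle> = 1\<close>.\<close>

definition horo_coord :: "real \<times> ('a::real_inner) \<Rightarrow> real \<times> 'a \<Rightarrow> 'a" where
  "horo_coord \<xi> w = snd w - (fst w / fst \<xi>) *\<^sub>R snd \<xi>"

lemma horo_coord_diff: "horo_coord \<xi> (v - w) = horo_coord \<xi> v - horo_coord \<xi> w"
  by (simp add: horo_coord_def diff_divide_distrib scaleR_diff_left)

lemma mink_eq_neg_inner_horo_coord:
  assumes "mink \<xi> \<xi> = 0" "0 < mink \<xi> e0" "mink A \<xi> = 0" "mink D \<xi> = 0"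
  shows "mink A D = - inner (horo_coord \<xi> A) (horo_coord \<xi> D)"
proof -
  define t w where "t = fst \<xi>" and "w = snd \<xi>"
  have t: "t \<noteq> 0" using assms(2) by (simp add: mink_e0 t_def)
  have ww: "inner w w = t * t"
    using isotropic_snd_norm[OF assms(1,2)] by (simp add: dot_square_norm power2_eq_square t_def w_def)
  have Aw: "inner (snd A) w = fst A * t" and Dw: "inner w (snd D) = fst D * t"
    using assms(3,4) by (simp_all add: mink_def t_def w_def inner_commute)
  have "inner (horo_coord \<xi> A) (horo_coord \<xi> D)
      = inner (snd A) (snd D) - fst D / t * inner (snd A) w - fst A / t * inner w (snd D)
        + fst A / t * (fst D / t) * inner w w"
    by (simp add: horo_coord_def inner_diff_left inner_diff_right algebra_simps
        flip: t_def w_def)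
  also have "\<dots> = inner (snd A) (snd D) - fst A * fst D"
    using t by (simp add: Aw Dw ww)
  finally show ?thesis by (simp add: mink_def)
qed

definition horo_proj :: "real \<times> ('a::real_inner) \<Rightarrow> real \<times> 'a \<Rightarrow> 'a" where
  "horo_proj \<xi> v = horo_coord \<xi> ((1 / mink v \<xi>) *\<^sub>R v)"

lemma dist_horo_proj:
  assumes "p \<in> hyp" "q \<in> hyp" "mink \<xi> \<xi> = 0" "0 < mink \<xi> e0"
  shows "(dist (horo_proj \<xi> p) (horo_proj \<xi> q))\<^sup>2
    = (2 * mink p q - mink p \<xi> / mink q \<xi> - mink q \<xi> / mink p \<xi>) / (mink p \<xi> * mink q \<xi>)"
proof -
  define a b where "a = mink p \<xi>" and "b = mink q \<xi>"
  have ab: "0 < a" "0 < b"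
    using mink_hyp_isotropic_pos assms unfolding a_def b_def by blast+
  define A where "A = (1 / a) *\<^sub>R p - (1 / b) *\<^sub>R q"
  have "mink A \<xi> = 0" using ab by (simp add: A_def mink_bilinear a_def b_def)
  then have "(dist (horo_proj \<xi> p) (horo_proj \<xi> q))\<^sup>2 = - mink A A"
    using mink_eq_neg_inner_horo_coord[OF assms(3,4)]
    by (simp add: dist_norm horo_proj_def power2_norm_eq_inner A_def horo_coord_diff
        flip: a_def b_def)
  also have "\<dots> = 2 * mink p q / (a * b) - 1 / a\<^sup>2 - 1 / b\<^sup>2"
    using assms(1,2) by (simp add: A_def mink_bilinear mink_commute[of q p] hyp_def)
      (simp add: diff_divide_distrib power2_eq_square)
  also have "\<dots> = (2 * mink p q - a / b - b / a) / (a * b)"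
    using ab by (simp add: diff_divide_distrib power2_eq_square)
  finally show ?thesis by (simp add: a_def b_def)
qed

lemma mink_isotropic_le:
  assumes "p \<in> hyp" "q \<in> hyp" "mink \<xi> \<xi> = 0" "0 < mink \<xi> e0"
  shows "mink p \<xi> \<le> 2 * mink q \<xi> * mink p q"
proof -
  define a b where "a = mink p \<xi>" and "b = mink q \<xi>"
  have ab: "0 < a" "0 < b"
    using mink_hyp_isotropic_pos assms unfolding a_def b_def by blast+
  have "0 \<le> (2 * mink p q - a / b - b / a) / (a * b)"
    using dist_horo_proj[OF assms] by (metis a_def b_def zero_le_power2)
  moreover have "0 < a * b" using ab by simp
  ultimately have "0 \<le> 2 * mink p q - a / b - b / a"
    by (auto simp: zero_le_divide_iff)
  moreover have "0 < b / a" using ab by simp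
  ultimately have "a / b \<le> 2 * mink p q" by linarith
  then show ?thesis using ab by (simp add: a_def b_def pos_divide_le_eq mult_ac)
qed

lemma dist_horo_proj_le:
  assumes "p \<in> hyp" "q \<in> hyp" "mink \<xi> \<xi> = 0" "0 < mink \<xi> e0"
  shows "(dist (horo_proj \<xi> p) (horo_proj \<xi> q))\<^sup>2 \<le> 2 * mink p q / (mink p \<xi> * mink q \<xi>)"
proof -
  define a b where "a = mink p \<xi>" and "b = mink q \<xi>"
  have ab: "0 < a" "0 < b"
    using mink_hyp_isotropic_pos assms unfolding a_def b_def by blast+
  have "0 < a / b" "0 < b / a" using ab by simp_all
  then have "2 * mink p q - a / b - b / a \<le> 2 * mink p q" by linarith
  then have "(2 * mink p q - a / b - b / a) / (a * b) \<le> 2 * mink p q / (a * b)"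
    using ab by (simp add: divide_right_mono)
  then show ?thesis using dist_horo_proj[OF assms] by (simp flip: a_def b_def)
qed

lemma mink_eq_dist_horo_proj:
  assumes "p \<in> hyp" "q \<in> hyp" "mink \<xi> \<xi> = 0" "0 < mink \<xi> e0"
    and "mink p \<xi> = mink q \<xi>"
  shows "mink p q = 1 + (mink p \<xi> * dist (horo_proj \<xi> p) (horo_proj \<xi> q))\<^sup>2 / 2"
proof -
  define \<beta> where "\<beta> = mink p \<xi>"
  have "0 < \<beta>" using mink_hyp_isotropic_pos assms unfolding \<beta>_def by blast
  moreover have "(dist (horo_proj \<xi> p) (horo_proj \<xi> q))\<^sup>2 = (2 * mink p q - 2) / \<beta>\<^sup>2"
    using dist_horo_proj[OF assms(1-4)] assms(5) \<open>0 < \<beta>\<close>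
    by (simp add: power2_eq_square flip: \<beta>_def)
  ultimately show ?thesis by (simp add: power_mult_distrib field_simps flip: \<beta>_def)
qed

section \<open>Horoballs\<close>

lemma hyp_towards_isotropic:
  assumes "y \<in> hyp" "0 < t" "mink \<xi> \<xi> = 0" "0 < mink \<xi> e0"
  defines "z \<equiv> t *\<^sub>R y + ((1 - t\<^sup>2) / (2 * t * mink y \<xi>)) *\<^sub>R \<xi>"
  shows "z \<in> hyp" "mink z \<xi> = t * mink y \<xi>"
proof -
  have y: "0 < mink y \<xi>" using mink_hyp_isotropic_pos[OF assms(1,3,4)] .
  have yy: "mink y y = 1" using assms(1) by (simp add: hyp_def)
  show z: "mink z \<xi> = t * mink y \<xi>"
    by (simp add: z_def mink_bilinear assms(3))
  define b where "b = (1 - t\<^sup>2) / (2 * t * mink y \<xi>)"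
  have "z = t *\<^sub>R y + b *\<^sub>R \<xi>" by (simp add: z_def b_def)
  then have "mink z z = t\<^sup>2 + 2 * t * b * mink y \<xi>"
    by (simp add: mink_bilinear assms(3) yy mink_commute[of \<xi> y] power2_eq_square
        algebra_simps)
  also have "\<dots> = 1" using y assms(2) by (simp add: b_def)
  finally have "mink z z = 1" .
  moreover have "0 < mink z \<xi>" using z y assms(2) by simp
  ultimately show "z \<in> hyp" using hyp_if_mink_isotropic_pos assms(3,4) by blast
qed

lemma e0_in_hyp: "e0 \<in> hyp"
  by (simp add: hyp_def mink_def e0_def)

lemma horosphere_nonempty:
  assumes "0 < a" "mink \<xi> \<xi> = 0" "0 < mink \<xi> e0"
  shows "\<exists>y\<in>hyp. mink y \<xi> = a"
proof -
  have "0 < mink e0 \<xi>" using mink_hyp_isotropic_pos[OF e0_in_hyp assms(2,3)] .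
  then show ?thesis
    using hyp_towards_isotropic[OF e0_in_hyp _ assms(2,3), of "a / mink e0 \<xi>"] assms(1) by auto
qed

lemma horoball_Int_nonempty:
  assumes "0 < a" "0 < b" "mink \<xi> \<xi> = 0" "0 < mink \<xi> e0"
  shows "horoball \<xi> a \<inter> horoball \<xi> b \<noteq> {}"
proof -
  have "0 < min a b / 2" using assms(1,2) by simp
  then obtain y where "y \<in> hyp" "mink y \<xi> = min a b / 2"
    using horosphere_nonempty assms(3,4) by blast
  then have "y \<in> horoball \<xi> a \<inter> horoball \<xi> b"
    using assms(1,2) by (auto simp: horoball_def min_def split: if_splits)
  then show ?thesis by blast
qed

lemma horoball_eq_iff:
  assumes "0 < a" "0 < b" "mink \<xi> \<xi> = 0" "0 < mink \<xi> e0"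
  shows "horoball \<xi> a = horoball \<xi> b \<longleftrightarrow> a = b"
proof
  assume eq: "horoball \<xi> a = horoball \<xi> b"
  show "a = b"
  proof (rule ccontr)
    assume "a \<noteq> b"
    have "0 < min a b" using assms(1,2) by simp
    then obtain y where y: "y \<in> hyp" "mink y \<xi> = min a b"
      using horosphere_nonempty assms(3,4) by blast
    have "horoball \<xi> (min a b) = horoball \<xi> (max a b)"
      using eq by (cases "a \<le> b") (simp_all add: min_def max_def)
    moreover have "y \<in> horoball \<xi> (max a b) - horoball \<xi> (min a b)"
      using y assms(1,2) \<open>a \<noteq> b\<close> by (auto simp: horoball_def min_def max_def)
    ultimately show False by blast
  qed
qed simp

lemma mink_isometry_eigenvector:
  assumes "isometry g" "g \<xi> = c *\<^sub>R \<xi>"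
  shows "c * mink (g v) \<xi> = mink v \<xi>"
  using assms unfolding isometry_def by (metis mink_scaleR_right)

lemma isometry_isotropic_eigenvalue_pos:
  assumes "isometry g" "g \<xi> = c *\<^sub>R \<xi>" "mink \<xi> \<xi> = 0" "0 < mink \<xi> e0"
  shows "0 < c"
proof -
  have "g e0 \<in> hyp" using assms(1) e0_in_hyp by (auto simp: isometry_def)
  then have pos: "0 < mink (g e0) \<xi>" "0 < mink e0 \<xi>"
    using mink_hyp_isotropic_pos e0_in_hyp assms(3,4) by blast+
  then have "0 < c * mink (g e0) \<xi>"
    using mink_isometry_eigenvector[OF assms(1,2)] by simp
  then show ?thesis using pos(1) by (simp add: zero_less_mult_iff)
qed

lemma isometry_image_horoball:
  assumes "isometry g" "g \<xi> = c *\<^sub>R \<xi>" "mink \<xi> \<xi> = 0" "0 < mink \<xi> e0"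
  shows "g ` horoball \<xi> \<epsilon> = horoball \<xi> (\<epsilon> / c)"
proof -
  have c: "0 < c" using isometry_isotropic_eigenvalue_pos assms by blast
  have height: "mink (g v) \<xi> = mink v \<xi> / c" for v
    using mink_isometry_eigenvector[OF assms(1,2), of v] c by (simp add: eq_divide_eq mult.commute)
  have hyp: "g ` hyp = hyp" using assms(1) by (simp add: isometry_def)
  show ?thesis
  proof (intro equalityI subsetI)
    fix w assume "w \<in> g ` horoball \<xi> \<epsilon>"
    then obtain v where "v \<in> horoball \<xi> \<epsilon>" "w = g v" by blast
    then show "w \<in> horoball \<xi> (\<epsilon> / c)"
      using hyp c by (auto simp: horoball_def height divide_strict_right_mono)
  next
    fix w assume w: "w \<in> horoball \<xi> (\<epsilon> / c)"
    then have "w \<in> g ` hyp" using hyp by (simp add: horoball_def)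
    then obtain v where v: "v \<in> hyp" "w = g v" by blast
    with w c have "v \<in> horoball \<xi> \<epsilon>"
      by (auto simp: horoball_def height pos_divide_less_eq zero_less_divide_iff)
    then show "w \<in> g ` horoball \<xi> \<epsilon>" using v(2) by blast
  qed
qed

section \<open>Words and distortion\<close>

lemma id_in_prods: "id \<in> S \<Longrightarrow> id \<in> prods S n"
proof (induction n)
  case (Suc n)
  then have "id \<circ> id \<in> prods S (Suc n)" by (simp only: prods.simps) blast
  then show ?case by (simp only: comp_id)
qed simp

lemma funpow_in_prods: "s \<in> S \<Longrightarrow> s ^^ n \<in> prods S n"
  by (induction n) (simp_all, blast)

lemma fin_sym_gen_set_subset: "fin_sym_gen_set S \<Gamma> \<Longrightarrow> S \<subseteq> \<Gamma>"
proof
  fix s assume "fin_sym_gen_set S \<Gamma>" "s \<in> S"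
  moreover have "s ^^ 1 = s" by simp
  ultimately have "s \<in> prods S 1" using funpow_in_prods[of s S 1] by simp
  then show "s \<in> \<Gamma>" using \<open>fin_sym_gen_set S \<Gamma>\<close> unfolding fin_sym_gen_set_def by blast
qed

lemma prods_subset:
  assumes "isometry_group G" "S \<subseteq> G"
  shows "prods S n \<subseteq> G"
proof (induction n)
  case (Suc n)
  have "s \<circ> g \<in> G" if "s \<in> S" "g \<in> prods S n" for s g
    using that Suc.IH assms unfolding isometry_group_def by blast
  then show ?case by auto
qed (use assms in \<open>simp add: isometry_group_def\<close>)

lemma arcosh_le_ln_double:
  assumes "1 \<le> (x::real)"
  shows "arcosh x \<le> ln (2 * x)"
proof -
  have "sqrt (x\<^sup>2 - 1) \<le> x" using assms by (simp add: real_sqrt_le_iff')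
  moreover have "0 < x + sqrt (x\<^sup>2 - 1)" using assms by (simp add: add_pos_nonneg)
  ultimately show ?thesis using assms by (simp add: arcosh_real_def)
qed

lemma le_exp_powr_if_ln_le:
  fixes C k X :: real
  assumes "0 < C" "0 < k" "0 < X" "C * ln k - C' \<le> ln X"
  shows "k \<le> exp (C' / C) * X powr (1 / C)"
proof -
  have "ln k * C \<le> C' + ln X" using assms(4) mult.commute[of C "ln k"] by linarith
  then have "ln k \<le> (C' + ln X) / C" using assms(1) by (simp add: pos_le_divide_eq)
  then have "ln k \<le> C' / C + ln X / C" by (simp add: add_divide_distrib)
  then have "exp (ln k) \<le> exp (C' / C + ln X / C)" by simp
  then show ?thesis using assms(2,3) by (simp add: exp_add powr_def)
qed

lemma powr_quadratic_le:
  assumes "0 < C" "0 \<le> L"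
  shows "(2 + 2 * L * (real n)\<^sup>2) powr (1 / C)
    \<le> (2 + 2 * L) powr (1 / C) * real n powr (2 / C) + 2 powr (1 / C)"
proof (cases "n = 0")
  case False
  then have "2 + 2 * L * (real n)\<^sup>2 \<le> (2 + 2 * L) * (real n)\<^sup>2"
    using assms(2) by (simp add: algebra_simps)
  then have "(2 + 2 * L * (real n)\<^sup>2) powr (1 / C) \<le> ((2 + 2 * L) * (real n)\<^sup>2) powr (1 / C)"
    using assms by (intro powr_mono2) auto
  also have "\<dots> = (2 + 2 * L) powr (1 / C) * ((real n)\<^sup>2) powr (1 / C)"
    using assms(2) by (simp add: powr_mult)
  also have "((real n)\<^sup>2) powr (1 / C) = real n powr (2 / C)"
    using powr_powr[of "real n" 2 "1 / C"] by simp
  finally show ?thesis using powr_ge_zero[of 2 "1 / C"] by linarith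
qed simp

lemma one_le_exponent_if_linear_le_powr:
  assumes "\<And>n. real n \<le> E * real n powr p + D"
  shows "1 \<le> p"
proof (rule ccontr)
  assume "\<not> 1 \<le> p"
  then have "((\<lambda>n. E * real n powr (p - 1) + D / real n) \<longlongrightarrow> E * 0 + 0) sequentially"
    by (intro tendsto_intros tendsto_neg_powr filterlim_real_sequentially) simp
  then have "\<forall>\<^sub>F n in sequentially. E * real n powr (p - 1) + D / real n < 1"
    by (rule order_tendstoD(2)) simp
  then obtain N where N: "\<And>n. N \<le> n \<Longrightarrow> E * real n powr (p - 1) + D / real n < 1"
    by (auto simp: eventually_sequentially)
  define n where "n = max N 1"
  have n: "1 \<le> n" "E * real n powr (p - 1) + D / real n < 1"
    using N[of n] by (auto simp: n_def)
  then have "E * real n powr p + D < real n"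
    by (simp add: powr_diff field_simps)
  then show False using assms[of n] by simp
qed

lemma preceq_delta_if_bound:
  assumes "id \<in> S" "0 < E" "\<And>n k. c ^^ k \<in> prods S n \<Longrightarrow> real k \<le> E * g (real n) + D"
  shows "preceq (\<lambda>n. real (delta S c n)) g"
proof -
  have "real (delta S c n) \<le> E * g (1 * real n) + D" for n
  proof -
    define b where "b = E * g (real n) + D"
    have 0: "c ^^ 0 \<in> prods S n" using id_in_prods[OF assms(1)] by simp
    then have "0 \<le> b" using assms(3) by (fastforce simp: b_def)
    have "{k. c ^^ k \<in> prods S n} \<noteq> {}" using 0 by blast
    then have "delta S c n \<le> nat \<lfloor>b\<rfloor>"
      unfolding delta_def
      by (rule cSup_least) (use assms(3) in \<open>auto simp: b_def intro: le_nat_floor\<close>)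
    then show ?thesis using \<open>0 \<le> b\<close> by (simp add: b_def) linarith
  qed
  then show ?thesis
    unfolding preceq_def using assms(2) by (intro exI[of _ E] conjI exI[of _ 1] exI[of _ D]) auto
qed

section \<open>Precisely invariant horoballs\<close>

locale precisely_invariant_horoball =
  fixes G :: "(real \<times> ('a::real_inner) \<Rightarrow> real \<times> 'a) set"
    and \<xi> :: "real \<times> 'a" and \<epsilon> :: real
  assumes group: "isometry_group G"
    and isotropic: "mink \<xi> \<xi> = 0" and future: "0 < mink \<xi> e0"
    and eps: "0 < \<epsilon>"
    and precise: "\<forall>g\<in>G. g ` horoball \<xi> \<epsilon> = horoball \<xi> \<epsilon>
      \<or> g ` horoball \<xi> \<epsilon> \<inter> horoball \<xi> \<epsilon> = {}"
begin

lemma isometry_G: "g \<in> G \<Longrightarrow> isometry g"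
  using group by (simp add: isometry_group_def)

lemma mink_G: "g \<in> G \<Longrightarrow> mink (g u) (g v) = mink u v"
  using isometry_G unfolding isometry_def by blast

lemma hyp_G: "g \<in> G \<Longrightarrow> v \<in> hyp \<Longrightarrow> g v \<in> hyp"
  using isometry_G unfolding isometry_def by blast

lemma height_pos: "v \<in> hyp \<Longrightarrow> 0 < mink v \<xi>"
  using mink_hyp_isotropic_pos isotropic future by blast

lemma horoball_image_eq:
  assumes "g \<in> G" "v \<in> horoball \<xi> \<epsilon>" "g v \<in> horoball \<xi> \<epsilon>"
  shows "g ` horoball \<xi> \<epsilon> = horoball \<xi> \<epsilon>"
  using precise assms by blast

text \<open>Points on the horosphere bounding the horoball are never moved into the horoball:
  a point of the horosphere that is mapped inside can be pushed slightly into the horoball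
  and stays mapped inside, so the horoball would be mapped onto itself.\<close>

lemma horosphere_height_le:
  assumes "g \<in> G" "y \<in> hyp" "mink y \<xi> = \<epsilon>"
  shows "\<epsilon> \<le> mink (g y) \<xi>"
proof (rule ccontr)
  define a c where "a = mink (g y) \<xi>" and "c = mink (g \<xi>) \<xi>"
  assume "\<not> \<epsilon> \<le> mink (g y) \<xi>"
  then have "a < \<epsilon>" by (simp add: a_def)
  define z where "z t = t *\<^sub>R y + ((1 - t\<^sup>2) / (2 * t * \<epsilon>)) *\<^sub>R \<xi>" for t
  have z: "z t \<in> hyp" "mink (z t) \<xi> = t * \<epsilon>" if "0 < t" for t
    using hyp_towards_isotropic[OF assms(2) that isotropic future] unfolding z_def assms(3) .
  have "linear g" using isometry_G[OF assms(1)] by (simp add: isometry_def bounded_linear.linear)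
  then have gz: "mink (g (z t)) \<xi> = t * a + (1 - t\<^sup>2) / (2 * t * \<epsilon>) * c" for t
    by (simp add: z_def linear_add linear_scale mink_bilinear a_def c_def)
  have "((\<lambda>t. t * a + (1 - t\<^sup>2) / (2 * t * \<epsilon>) * c) \<longlongrightarrow> 1 * a + (1 - 1\<^sup>2) / (2 * 1 * \<epsilon>) * c)
      (at_left 1)"
    using eps by (intro tendsto_intros) simp_all
  then have "\<forall>\<^sub>F t in at_left 1. mink (g (z t)) \<xi> < \<epsilon>"
    unfolding gz by (rule order_tendstoD(2)) (simp add: \<open>a < \<epsilon>\<close>)
  moreover have "\<forall>\<^sub>F t in at_left 1. t \<in> {0<..<1::real}"
    by (rule eventually_at_left_real) simp
  ultimately have "\<forall>\<^sub>F t in at_left 1. mink (g (z t)) \<xi> < \<epsilon> \<and> t \<in> {0<..<1}"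
    by (rule eventually_conj)
  then have "\<exists>t. mink (g (z t)) \<xi> < \<epsilon> \<and> t \<in> {0<..<1}"
    by (rule eventually_happens'[rotated]) simp
  then obtain t where t: "0 < t" "t < 1" "mink (g (z t)) \<xi> < \<epsilon>" by auto
  have "z t \<in> horoball \<xi> \<epsilon>"
    using z[OF t(1)] t(1,2) eps by (simp add: horoball_def)
  moreover have "g (z t) \<in> horoball \<xi> \<epsilon>"
    using hyp_G[OF assms(1) z(1)] height_pos t by (simp add: horoball_def)
  ultimately have image: "g ` horoball \<xi> \<epsilon> = horoball \<xi> \<epsilon>"
    using horoball_image_eq assms(1) by blast
  have "g y \<in> horoball \<xi> \<epsilon>"
    using hyp_G[OF assms(1,2)] height_pos \<open>a < \<epsilon>\<close> by (simp add: horoball_def a_def)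
  then have "g y \<in> g ` horoball \<xi> \<epsilon>" using image by simp
  then obtain w where w: "w \<in> horoball \<xi> \<epsilon>" "g y = g w" by blast
  have "inj g" using isometry_G[OF assms(1)] by (simp add: isometry_def bij_is_inj)
  then have "y = w" using w(2) by (simp add: inj_eq)
  then have "y \<in> horoball \<xi> \<epsilon>" using w(1) by simp
  then show False using assms(3) by (simp add: horoball_def)
qed

lemma orbit_height_lower_bound:
  assumes "x \<in> hyp"
  obtains \<delta> where "0 < \<delta>" "\<And>g. g \<in> G \<Longrightarrow> \<delta> \<le> mink (g x) \<xi>"
proof -
  obtain y where y: "y \<in> hyp" "mink y \<xi> = \<epsilon>"
    using horosphere_nonempty eps isotropic future by blast
  define K where "K = mink y x"
  have K: "1 \<le> K" using mink_hyp_ge_one y(1) assms by (simp add: K_def)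
  have bound: "\<epsilon> / (2 * K) \<le> mink (g x) \<xi>" if "g \<in> G" for g
  proof -
    have "\<epsilon> \<le> mink (g y) \<xi>" using horosphere_height_le that y by blast
    also have "\<dots> \<le> 2 * mink (g x) \<xi> * mink (g y) (g x)"
      using mink_isotropic_le hyp_G that y(1) assms isotropic future by blast
    finally show ?thesis using K by (simp add: mink_G[OF that] K_def[symmetric] pos_divide_le_eq mult_ac)
  qed
  show ?thesis by (rule that[of "\<epsilon> / (2 * K)"]) (use eps K bound in auto)
qed

lemma fixes_line_imp_fixes:
  assumes "g \<in> G" "fixes_line g \<xi>"
  shows "g \<xi> = \<xi>"
proof -
  obtain c where c: "g \<xi> = c *\<^sub>R \<xi>" using assms(2) by (auto simp: fixes_line_def)
  have "0 < c" using isometry_isotropic_eigenvalue_pos isometry_G[OF assms(1)] c isotropic future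
    by blast
  have image: "g ` horoball \<xi> \<epsilon> = horoball \<xi> (\<epsilon> / c)"
    using isometry_image_horoball isometry_G[OF assms(1)] c isotropic future by blast
  moreover have pos: "0 < \<epsilon> / c" using \<open>0 < c\<close> eps by simp
  then have "horoball \<xi> (\<epsilon> / c) \<inter> horoball \<xi> \<epsilon> \<noteq> {}"
    using horoball_Int_nonempty eps isotropic future by blast
  ultimately have "g ` horoball \<xi> \<epsilon> \<inter> horoball \<xi> \<epsilon> \<noteq> {}" by simp
  then have "g ` horoball \<xi> \<epsilon> = horoball \<xi> \<epsilon>" using precise assms(1) by blast
  then have "horoball \<xi> (\<epsilon> / c) = horoball \<xi> \<epsilon>" using image by simp
  then have "\<epsilon> / c = \<epsilon>"
    using horoball_eq_iff[OF pos eps isotropic future] by simp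
  then have "c = 1" using eps \<open>0 < c\<close> by (simp add: divide_eq_eq)
  then show ?thesis using c by simp
qed

lemma dist_horo_proj_prods_le:
  assumes "S \<subseteq> G" "x \<in> hyp" "0 < \<delta>" "\<And>g. g \<in> G \<Longrightarrow> \<delta> \<le> mink (g x) \<xi>"
    and "\<And>s. s \<in> S \<Longrightarrow> mink (s x) x \<le> K"
    and "g \<in> prods S n" "h \<in> G"
  shows "dist (horo_proj \<xi> (h (g x))) (horo_proj \<xi> (h x)) \<le> real n * sqrt (2 * K / \<delta>\<^sup>2)"
  using assms(6,7)
proof (induction n arbitrary: g h)
  case (Suc n)
  then obtain s g' where sg: "g = s \<circ> g'" "s \<in> S" "g' \<in> prods S n" by auto
  have hs: "h \<circ> s \<in> G" using Suc.prems(2) sg(2) assms(1) group by (auto simp: isometry_group_def)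
  have p: "h (s x) \<in> hyp" "h x \<in> hyp"
    using hyp_G[OF hs assms(2)] hyp_G[OF Suc.prems(2) assms(2)] by simp_all
  have step: "dist (horo_proj \<xi> (h (s x))) (horo_proj \<xi> (h x)) \<le> sqrt (2 * K / \<delta>\<^sup>2)"
  proof (rule real_le_rsqrt)
    have "1 \<le> mink (h (s x)) (h x)" using mink_hyp_ge_one p by blast
    moreover have "mink (h (s x)) (h x) \<le> K" using mink_G[OF Suc.prems(2)] assms(5) sg(2) by simp
    moreover have "\<delta> * \<delta> \<le> mink (h (s x)) \<xi> * mink (h x) \<xi>"
      using assms(3) assms(4)[OF hs] assms(4)[OF Suc.prems(2)] by (intro mult_mono) auto
    ultimately have "2 * mink (h (s x)) (h x) / (mink (h (s x)) \<xi> * mink (h x) \<xi>) \<le> 2 * K / \<delta>\<^sup>2"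
      using assms(3) by (intro frac_le) (auto simp: power2_eq_square)
    then show "(dist (horo_proj \<xi> (h (s x))) (horo_proj \<xi> (h x)))\<^sup>2 \<le> 2 * K / \<delta>\<^sup>2"
      using dist_horo_proj_le[OF p isotropic future] by linarith
  qed
  have "dist (horo_proj \<xi> (h (g x))) (horo_proj \<xi> (h x))
      \<le> dist (horo_proj \<xi> ((h \<circ> s) (g' x))) (horo_proj \<xi> ((h \<circ> s) x))
        + dist (horo_proj \<xi> (h (s x))) (horo_proj \<xi> (h x))"
    using dist_triangle by (simp add: sg(1))
  also have "\<dots> \<le> real n * sqrt (2 * K / \<delta>\<^sup>2) + sqrt (2 * K / \<delta>\<^sup>2)"
    using Suc.IH[OF sg(3) hs] step by linarith
  finally show ?case by (simp add: algebra_simps)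
qed simp

lemma mink_prods_le_quadratic:
  assumes "finite S" "S \<subseteq> G" "x \<in> hyp"
  obtains L where "0 \<le> L"
    "\<And>n g. g \<in> prods S n \<Longrightarrow> g \<xi> = \<xi> \<Longrightarrow> mink (g x) x \<le> 1 + L * (real n)\<^sup>2"
proof -
  obtain \<delta> where \<delta>: "0 < \<delta>" "\<And>g. g \<in> G \<Longrightarrow> \<delta> \<le> mink (g x) \<xi>"
    using orbit_height_lower_bound assms(3) by blast
  define K where "K = Max (insert 0 ((\<lambda>s. mink (s x) x) ` S))"
  have K: "\<And>s. s \<in> S \<Longrightarrow> mink (s x) x \<le> K" using assms(1) by (simp add: K_def)
  define R where "R = sqrt (2 * K / \<delta>\<^sup>2)"
  define L where "L = (mink x \<xi> * R)\<^sup>2 / 2"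
  have bound: "mink (g x) x \<le> 1 + L * (real n)\<^sup>2" if g: "g \<in> prods S n" "g \<xi> = \<xi>" for n g
  proof -
    have "g \<in> G" using prods_subset[OF group assms(2)] g(1) by blast
    then have gx: "g x \<in> hyp" "mink (g x) \<xi> = mink x \<xi>"
      using hyp_G assms(3) mink_G[of g x \<xi>] g(2) by auto
    have id: "id \<in> G" using group by (simp add: isometry_group_def)
    have "dist (horo_proj \<xi> (id (g x))) (horo_proj \<xi> (id x)) \<le> real n * R"
      unfolding R_def by (rule dist_horo_proj_prods_le[where g = g and h = id])
        (use assms(2,3) \<delta> K g(1) id in auto)
    then have "mink x \<xi> * dist (horo_proj \<xi> (g x)) (horo_proj \<xi> x) \<le> mink x \<xi> * (real n * R)"
      using height_pos[OF assms(3)] by (simp add: mult_left_mono)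
    then have "(mink x \<xi> * dist (horo_proj \<xi> (g x)) (horo_proj \<xi> x))\<^sup>2 \<le> (mink x \<xi> * (real n * R))\<^sup>2"
      using height_pos[OF assms(3)] by (intro power_mono) auto
    moreover have "mink (g x) x = 1 + (mink x \<xi> * dist (horo_proj \<xi> (g x)) (horo_proj \<xi> x))\<^sup>2 / 2"
      using mink_eq_dist_horo_proj[OF gx(1) assms(3) isotropic future gx(2)] gx(2) by simp
    moreover have "(mink x \<xi> * (real n * R))\<^sup>2 / 2 = L * (real n)\<^sup>2"
      by (simp add: L_def power_mult_distrib)
    ultimately show ?thesis by linarith
  qed
  show ?thesis by (rule that[of L]) (simp add: L_def, fact bound)
qed

lemma funpow_word_length_bound:
  assumes "f \<xi> = \<xi>" "x \<in> hyp" "0 < C"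
    and growth: "\<forall>\<^sub>F n in sequentially. hdist ((f ^^ n) x) x \<ge> C * ln (real n) - C'"
    and "finite S" "S \<subseteq> G"
  obtains E D where "0 < E" "\<And>n k. f ^^ k \<in> prods S n \<Longrightarrow> real k \<le> E * real n powr (2 / C) + D"
proof -
  obtain L where L: "0 \<le> L"
    "\<And>n g. g \<in> prods S n \<Longrightarrow> g \<xi> = \<xi> \<Longrightarrow> mink (g x) x \<le> 1 + L * (real n)\<^sup>2"
    using mink_prods_le_quadratic assms(5,6,2) by blast
  obtain N where N: "\<And>k. N \<le> k \<Longrightarrow> C * ln (real k) - C' \<le> hdist ((f ^^ k) x) x"
    using growth by (auto simp: eventually_sequentially)
  define M where "M = exp (C' / C)"
  define E where "E = M * (2 + 2 * L) powr (1 / C)"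
  define D where "D = real N + M * 2 powr (1 / C)"
  have "0 < E" using L(1) by (simp add: E_def M_def)
  have bound: "real k \<le> E * real n powr (2 / C) + D" if fk: "f ^^ k \<in> prods S n" for n k
  proof (cases "N \<le> k \<and> 1 \<le> k")
    case False
    then have "real k \<le> real N" by auto
    moreover have "0 \<le> E * real n powr (2 / C)" "0 \<le> M * 2 powr (1 / C)"
      using \<open>0 < E\<close> by (simp_all add: M_def)
    ultimately show ?thesis by (simp add: D_def)
  next
    case True
    define m where "m = mink ((f ^^ k) x) x"
    have "f ^^ k \<in> G" using prods_subset[OF group assms(6)] fk by blast
    then have "1 \<le> m" using mink_hyp_ge_one hyp_G assms(2) unfolding m_def by blast
    have "(f ^^ k) \<xi> = \<xi>" by (induction k) (simp_all add: assms(1))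
    then have "m \<le> 1 + L * (real n)\<^sup>2" using L(2)[OF fk] by (simp add: m_def)
    have "C * ln (real k) - C' \<le> arcosh m" using N True by (simp add: hdist_def m_def)
    also have "\<dots> \<le> ln (2 * m)" using arcosh_le_ln_double \<open>1 \<le> m\<close> by blast
    also have "\<dots> \<le> ln (2 + 2 * L * (real n)\<^sup>2)"
      using \<open>1 \<le> m\<close> \<open>m \<le> 1 + L * (real n)\<^sup>2\<close> by simp
    moreover have "0 < 2 + 2 * L * (real n)\<^sup>2" using L(1) by (simp add: add_pos_nonneg)
    ultimately have "real k \<le> M * (2 + 2 * L * (real n)\<^sup>2) powr (1 / C)"
      unfolding M_def using True by (intro le_exp_powr_if_ln_le assms(3)) auto
    also have "\<dots> \<le> M * ((2 + 2 * L) powr (1 / C) * real n powr (2 / C) + 2 powr (1 / C))"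
      using powr_quadratic_le[OF assms(3) L(1)] by (simp add: M_def)
    also have "\<dots> \<le> E * real n powr (2 / C) + D" by (simp add: E_def D_def algebra_simps)
    finally show ?thesis .
  qed
  show ?thesis using that \<open>0 < E\<close> bound by blast
qed

end

lemma preceq_powr_one:
  assumes "preceq h (\<lambda>x. x powr 1)"
  shows "preceq h (\<lambda>x. x)"
proof -
  obtain A B D where "0 < A" "0 < B" "\<And>n. h n \<le> A * (B * real n) powr 1 + D"
    using assms unfolding preceq_def by blast
  then show ?thesis
    unfolding preceq_def by (intro exI[of _ A] conjI exI[of _ B] exI[of _ D]) auto
qed

theorem theorem4p1:
  fixes G :: "(real \<times> ('a::{real_inner,complete_space}) \<Rightarrow> real \<times> 'a) set"
    and f :: "real \<times> 'a \<Rightarrow> real \<times> 'a"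
    and \<xi> :: "real \<times> 'a"
    and C C' :: real and x0 :: "real \<times> 'a" and \<epsilon> :: real
  assumes G: "isometry_group G"
    and fG: "f \<in> G"
    and par: "parabolic f"
    and xi: "isotropic \<xi>" "mink \<xi> e0 > 0" "fixes_line f \<xi>"
    and C: "C > 0" "C' > 0" "x0 \<in> hyp"
    and growth: "\<forall>\<^sub>F n in sequentially. hdist ((f ^^ n) x0) x0 \<ge> C * ln (real n) - C'"
    and eps: "\<epsilon> > 0"
    and B: "\<forall>g\<in>G. g ` horoball \<xi> \<epsilon> = horoball \<xi> \<epsilon> \<or> g ` horoball \<xi> \<epsilon> \<inter> horoball \<xi> \<epsilon> = {}"
  shows "(\<forall>\<Gamma> S. \<Gamma> \<subseteq> G \<and> f \<in> \<Gamma> \<and> fin_sym_gen_set S \<Gamma>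
            \<longrightarrow> preceq (\<lambda>n. real (delta S f n)) (\<lambda>x. x powr (2 / C)))
         \<and> C \<le> 2 \<and> (C = 2 \<longrightarrow> undistorted f G)"
proof -
  interpret precisely_invariant_horoball G \<xi> \<epsilon>
    using G xi(1,2) eps B by unfold_locales (simp_all add: isotropic_def)
  have f_fixes: "f \<xi> = \<xi>" using fixes_line_imp_fixes fG xi(3) by blast
  note word_bound = funpow_word_length_bound[OF f_fixes C(3,1) growth]
  have distortion: "preceq (\<lambda>n. real (delta S f n)) (\<lambda>x. x powr (2 / C))"
    if "\<Gamma> \<subseteq> G" "fin_sym_gen_set S \<Gamma>" for \<Gamma> S
  proof -
    have S: "finite S" "id \<in> S" "S \<subseteq> G"
      using that fin_sym_gen_set_subset[OF that(2)] by (auto simp: fin_sym_gen_set_def)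
    obtain E D where "0 < E" "\<And>n k. f ^^ k \<in> prods S n \<Longrightarrow> real k \<le> E * real n powr (2 / C) + D"
      using word_bound[OF S(1,3)] by blast
    then show ?thesis by (intro preceq_delta_if_bound[OF S(2), of E]) simp_all
  qed
  obtain E D where "\<And>n k. f ^^ k \<in> prods {f} n \<Longrightarrow> real k \<le> E * real n powr (2 / C) + D"
    using word_bound[of "{f}"] fG by blast
  then have "1 \<le> 2 / C"
    using funpow_in_prods[of f "{f}"] by (intro one_le_exponent_if_linear_le_powr) auto
  then have "C \<le> 2" using C(1) by (simp add: le_divide_eq)
  moreover have "undistorted f G" if "C = 2"
  proof -
    have "preceq (\<lambda>n. real (delta S f n)) (\<lambda>x. x powr 1)"
      if "\<Gamma> \<subseteq> G" "fin_sym_gen_set S \<Gamma>" for \<Gamma> S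
      using distortion[OF that] \<open>C = 2\<close> by simp
    then show ?thesis unfolding undistorted_def using preceq_powr_one by blast
  qed
  ultimately show ?thesis using distortion by blast
qed

end
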